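(* Let $K$ be a finite field of characteristic $p$ and let $T$ be a finite $p$-group. Then the one-dimensional ideal $K\sum_{t\in T}t$ of $KT$ is checkable if and only if $T$ is cyclic.
   Context: A right ideal $I\le KT$ is called checkable if there is $v\in KT$ with $I=\{a\in KT: va=0\}$. *)

theory Defs
  imports "HOL-Algebra.Elementary_Groups" "HOL-Computational_Algebra.Primes"
begin

text \<open>Group algebra KT of a finite group G (HOL-Algebra structure) over a field 'k.
 Elements are functions carrier G \<rightarrow> 'k, extended by 0 outside the carrier.\<close>

definition group_algebra :: "('g, 'b) monoid_scheme \<Rightarrow> ('g \<Rightarrow> 'k::field) set" where
  "group_algebra G = {a. \<forall>x. x \<notin> carrier G \<longrightarrow> a x = 0}"

definition ga_mult :: "('g, 'b) monoid_scheme \<Rightarrow> ('g \<Rightarrow> 'k::field) \<Rightarrow> ('g \<Rightarrow> 'k) \<Rightarrow> ('g \<Rightarrow> 'k)" where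
  "ga_mult G a b = (\<lambda>x. if x \<in> carrier G
      then (\<Sum>y\<in>carrier G. a y * b (inv\<^bsub>G\<^esub> y \<otimes>\<^bsub>G\<^esub> x)) else 0)"

definition checkable :: "('g, 'b) monoid_scheme \<Rightarrow> ('g \<Rightarrow> 'k::field) set \<Rightarrow> bool" where
  "checkable G I \<longleftrightarrow> (\<exists>v \<in> group_algebra G. I = {a \<in> group_algebra G. ga_mult G v a = (\<lambda>_. 0)})"

definition ga_sum_elem :: "('g, 'b) monoid_scheme \<Rightarrow> ('g \<Rightarrow> 'k::field)" where
  "ga_sum_elem G = (\<lambda>x. if x \<in> carrier G then 1 else 0)"

end

theory Submission
  imports Defs "HOL-Algebra.Group_Action" "HOL-Algebra.Sylow" "HOL-Algebra.Multiplicative_Group"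
    "HOL-Library.Function_Algebras"
begin

text \<open>
  If \<open>T\<close> is cyclic with generator \<open>g\<close>, the annihilator of \<open>1 - g\<close> consists of the functions
  invariant under left translation by \<open>g\<close>, i.e. of the multiples of \<open>\<sigma> = \<Sum>t\<in>T. t\<close>.

  Conversely let \<open>K\<sigma> = {a. v a = 0}\<close> with \<open>T\<close> not cyclic. Intersecting two maximal subgroups
  (normal of index \<open>p\<close>, as in every \<open>p\<close>-group) gives \<open>N\<close> with \<open>T/N\<close> elementary abelian of order
  at least \<open>p\<^sup>2\<close>. On the \<open>N\<close>-invariant elements \<open>W \<cong> K[T/N]\<close> left multiplication by \<open>v\<close> is a sum
  of the commuting operators \<open>v\<^sub>y\<close> times translation by \<open>y\<close>, whose \<open>p\<close>-th powers are the scalars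
  \<open>v\<^sub>y\<^sup>p\<close>; by the Frobenius identity its \<open>p\<close>-th power is \<open>(\<Sum>y. v\<^sub>y)\<^sup>p\<close>, which vanishes because
  \<open>v \<sigma> = 0\<close>. Its kernel lies in \<open>K\<sigma>\<close>, so \<open>|W| \<le> |K|\<^sup>p\<close>, whereas \<open>|W| = |K|\<^bsup>|T:N|\<^esup> > |K|\<^sup>p\<close>.
\<close>

section \<open>Maximal subgroups of \<open>p\<close>-groups\<close>

lemma (in group) prime_power_order_finite:
  assumes "prime p" "order G = p ^ n"
  shows "finite (carrier G)"
  using assms order_gt_0_iff_finite prime_gt_0_nat by fastforce

lemma (in group) card_subgroup_prime_power:
  assumes "prime p" "order G = p ^ n" "subgroup H G"
  shows "\<exists>i. card H = p ^ i"
proof -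
  have "card H dvd p ^ n" using lagrange[OF assms(3)] assms(2) by (metis dvd_triv_right)
  thus ?thesis using divides_primepow_nat[OF assms(1)] by auto
qed

lemma (in group) card_rcosets_prime_power:
  assumes "prime p" "order G = p ^ n" "subgroup H G"
  shows "\<exists>i. card (rcosets H) = p ^ i"
proof -
  have "card (rcosets H) dvd p ^ n" using lagrange[OF assms(3)] assms(2) by (metis dvd_triv_left)
  thus ?thesis using divides_primepow_nat[OF assms(1)] by auto
qed

lemma (in group) p_group_proper_subgroup_index_dvd:
  assumes "prime p" "order G = p ^ n" "subgroup H G" "H \<noteq> carrier G"
  shows "p dvd card (rcosets H)"
proof -
  obtain k where k: "card (rcosets H) = p ^ k" using card_rcosets_prime_power[OF assms(1-3)] by blast
  have "k \<noteq> 0"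
  proof
    assume "k = 0"
    hence "card H = card (carrier G)" using lagrange[OF assms(3)] k by (simp add: order_def)
    thus False
      using card_subset_eq[OF prime_power_order_finite[OF assms(1,2)] subgroup.subset[OF assms(3)]] assms(4)
      by simp
  qed
  thus ?thesis using k by simp
qed

lemma (in group) p_group_index_gt_prime:
  assumes "prime p" "order G = p ^ n" "subgroup H G" "subgroup K G" "H \<subset> K" "K \<noteq> carrier G"
  shows "p < card (rcosets H)"
proof -
  have p1: "p > 1" using prime_gt_1_nat[OF assms(1)] .
  have fin: "finite (carrier G)" using prime_power_order_finite[OF assms(1,2)] .
  obtain a where a: "card H = p ^ a" using card_subgroup_prime_power[OF assms(1-3)] by blast
  obtain b where b: "card K = p ^ b" using card_subgroup_prime_power[OF assms(1,2,4)] by blast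
  obtain k where k: "card (rcosets H) = p ^ k" using card_rcosets_prime_power[OF assms(1-3)] by blast
  have "card H < card K"
    using assms(5) finite_subset[OF subgroup.subset[OF assms(4)] fin] by (rule psubset_card_mono[rotated])
  hence "a < b" using a b p1 by simp
  have "card K < card (carrier G)"
    using assms(6) fin subgroup.subset[OF assms(4)] by (intro psubset_card_mono) auto
  hence "b < n" using b assms(2) p1 by (simp add: order_def)
  have "p ^ (k + a) = p ^ n" using lagrange[OF assms(3)] k a assms(2) by (simp add: power_add)
  hence "k + a = n" using p1 by (simp add: power_inject_exp)
  hence "p ^ 2 \<le> p ^ k" using \<open>a < b\<close> \<open>b < n\<close> p1 by (intro power_increasing) auto
  moreover have "p < p ^ 2" using p1 by (simp add: power2_eq_square)
  ultimately show ?thesis using k by simp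
qed

lemma (in group) group_action_restrictI:
  assumes closed: "\<And>g x. g \<in> carrier G \<Longrightarrow> x \<in> E \<Longrightarrow> \<phi> g x \<in> E"
    and one: "\<And>x. x \<in> E \<Longrightarrow> \<phi> \<one> x = x"
    and mult: "\<And>g h x. g \<in> carrier G \<Longrightarrow> h \<in> carrier G \<Longrightarrow> x \<in> E \<Longrightarrow> \<phi> (g \<otimes> h) x = \<phi> g (\<phi> h x)"
  shows "group_action G E (\<lambda>g. restrict (\<phi> g) E)"
proof -
  have bij: "restrict (\<phi> g) E \<in> Bij E" if g: "g \<in> carrier G" for g
  proof -
    have "bij_betw (\<phi> g) E E"
    proof (rule bij_betwI[where g = "\<phi> (inv g)"])
      show "\<phi> (inv g) (\<phi> g x) = x" if "x \<in> E" for x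
        using mult[of "inv g" g x] one that g by simp
      show "\<phi> g (\<phi> (inv g) x) = x" if "x \<in> E" for x
        using mult[of g "inv g" x] one that g by simp
    qed (use closed g in auto)
    thus ?thesis unfolding Bij_def by simp
  qed
  have "restrict (\<phi> (g \<otimes> h)) E = compose E (restrict (\<phi> g) E) (restrict (\<phi> h) E)"
    if "g \<in> carrier G" "h \<in> carrier G" for g h
    using that closed mult by (auto simp: compose_def fun_eq_iff)
  hence "(\<lambda>g. restrict (\<phi> g) E) \<in> hom G (BijGroup E)"
    using bij by (auto intro!: homI simp: BijGroup_def)
  thus ?thesis
    unfolding group_action_def group_hom_def group_hom_axioms_def
    using group_BijGroup is_group by blast
qed

lemma (in group_action) card_fixed_points_mod_prime:
  assumes "prime p" "order G = p ^ n" "finite E"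
  shows "card {x \<in> E. \<forall>g \<in> carrier G. \<phi> g x = x} mod p = card E mod p"
proof -
  let ?F = "{x \<in> E. \<forall>g \<in> carrier G. \<phi> g x = x}"
  let ?O = "orbits G E \<phi>"
  let ?O1 = "{Ob \<in> ?O. card Ob = 1}"
  have finO: "finite ?O" using assms(3) unfolding orbits_def orbit_def by auto
  have orbit_card: "card Ob = 1 \<or> p dvd card Ob" if Ob: "Ob \<in> ?O" for Ob
  proof -
    obtain x where x: "x \<in> E" "Ob = orbit G \<phi> x" using Ob unfolding orbits_def by blast
    have "card Ob dvd p ^ n"
      using orbit_stabilizer_theorem[OF x(1)] assms(2) x(2) by (metis dvd_triv_left)
    then obtain j where "card Ob = p ^ j" using divides_primepow_nat[OF assms(1)] by blast
    thus ?thesis by (cases j) auto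
  qed
  have "?O1 = (\<lambda>x. {x}) ` ?F"
  proof (intro equalityI subsetI)
    fix Ob assume Ob: "Ob \<in> ?O1"
    obtain x where x: "x \<in> E" "Ob = orbit G \<phi> x" using Ob unfolding orbits_def by blast
    have "x \<in> Ob" using x by (simp add: orbit_refl)
    hence "Ob = {x}" using Ob by (auto simp: card_1_singleton_iff)
    moreover have "\<phi> g x = x" if "g \<in> carrier G" for g
      using that \<open>Ob = {x}\<close> x(2) unfolding orbit_def by blast
    ultimately show "Ob \<in> (\<lambda>x. {x}) ` ?F" using x(1) by blast
  next
    fix Ob assume "Ob \<in> (\<lambda>x. {x}) ` ?F"
    then obtain x where x: "x \<in> E" "\<forall>g\<in>carrier G. \<phi> g x = x" "Ob = {x}" by blast
    moreover have "x \<in> orbit G \<phi> x" using x(1) by (rule orbit_refl)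
    ultimately have "orbit G \<phi> x = Ob" unfolding orbit_def by auto
    thus "Ob \<in> ?O1" using x unfolding orbits_def by auto
  qed
  hence F: "card ?F = card ?O1" by (simp add: card_image)
  have "(\<lambda>Ob. \<Sum>x\<in>Ob. 1) = card" by (simp add: fun_eq_iff)
  hence "card E = (\<Sum>Ob\<in>?O. card Ob)" using disjoint_sum[OF assms(3), of "\<lambda>_. 1::nat"] by simp
  also have "\<dots> = (\<Sum>Ob\<in>?O - ?O1. card Ob) + (\<Sum>Ob\<in>?O1. card Ob)"
    by (rule sum.subset_diff) (auto simp: finO)
  also have "(\<Sum>Ob\<in>?O1. card Ob) = card ?F" using F by simp
  finally have "card E = (\<Sum>Ob\<in>?O - ?O1. card Ob) + card ?F" .
  moreover have "p dvd (\<Sum>Ob\<in>?O - ?O1. card Ob)" using orbit_card by (auto intro!: dvd_sum)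
  ultimately show ?thesis by auto
qed

lemma (in group) subgroup_rcosets_action:
  assumes "subgroup H G"
  shows "group_action (G\<lparr>carrier := H\<rparr>) (rcosets H) (\<lambda>h. \<lambda>C \<in> rcosets H. C #> inv h)"
proof -
  interpret H: group "G\<lparr>carrier := H\<rparr>" using subgroup_imp_group[OF assms] .
  have Hsub: "H \<subseteq> carrier G" using subgroup.subset[OF assms] .
  have coset: "\<exists>x\<in>carrier G. C = H #> x" if "C \<in> rcosets H" for C
    using that unfolding RCOSETS_def by blast
  show ?thesis
  proof (rule H.group_action_restrictI)
    fix h C assume "h \<in> carrier (G\<lparr>carrier := H\<rparr>)" "C \<in> rcosets H"
    moreover obtain x where "x \<in> carrier G" "C = H #> x" using coset \<open>C \<in> rcosets H\<close> by blast
    moreover have "inv h \<in> carrier G" using \<open>h \<in> carrier (G\<lparr>carrier := H\<rparr>)\<close> Hsub by auto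
    ultimately show "C #> inv h \<in> rcosets H" using Hsub by (simp add: coset_mult_assoc rcosetsI)
  next
    fix C assume "C \<in> rcosets H"
    hence "C \<subseteq> carrier G" using rcosets_part_G[OF assms] by blast
    thus "C #> inv \<one>\<^bsub>G\<lparr>carrier := H\<rparr>\<^esub> = C" by simp
  next
    fix g h C assume "g \<in> carrier (G\<lparr>carrier := H\<rparr>)" "h \<in> carrier (G\<lparr>carrier := H\<rparr>)"
      "C \<in> rcosets H"
    hence "g \<in> carrier G" "h \<in> carrier G" using Hsub by auto
    moreover obtain x where "x \<in> carrier G" "C = H #> x" using coset \<open>C \<in> rcosets H\<close> by blast
    ultimately show "C #> inv (g \<otimes>\<^bsub>G\<lparr>carrier := H\<rparr>\<^esub> h) = C #> inv h #> inv g"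
      using Hsub by (simp add: coset_mult_assoc inv_mult_group m_assoc)
  qed
qed

lemma (in group) p_group_exists_fixed_rcoset:
  assumes "prime p" "order G = p ^ n" "subgroup M G" "M \<noteq> carrier G"
  obtains C where "C \<in> rcosets M" "C \<noteq> M" "\<And>h. h \<in> M \<Longrightarrow> C #> h = C"
proof -
  have Msub: "M \<subseteq> carrier G" using subgroup.subset[OF assms(3)] .
  interpret A: group_action "G\<lparr>carrier := M\<rparr>" "rcosets M" "\<lambda>h. \<lambda>C \<in> rcosets M. C #> inv h"
    by (rule subgroup_rcosets_action[OF assms(3)])
  let ?F = "{C \<in> rcosets M. \<forall>h \<in> M. C #> inv h = C}"
  obtain i where "card M = p ^ i" using card_subgroup_prime_power[OF assms(1-3)] by blast
  hence ordM: "order (G\<lparr>carrier := M\<rparr>) = p ^ i" by (simp add: order_def)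
  have finE: "finite (rcosets M)"
    using prime_power_order_finite[OF assms(1,2)] by (simp add: RCOSETS_def)
  have "?F = {C \<in> rcosets M. \<forall>h \<in> carrier (G\<lparr>carrier := M\<rparr>). (\<lambda>C \<in> rcosets M. C #> inv h) C = C}"
    by auto
  hence "card ?F mod p = card (rcosets M) mod p"
    using A.card_fixed_points_mod_prime[OF assms(1) ordM finE] by simp
  hence "p dvd card ?F"
    using p_group_proper_subgroup_index_dvd[OF assms] by (simp add: mod_eq_0_iff_dvd)
  have "M #> inv h = M" if "h \<in> M" for h
    using Msub subgroup.m_inv_closed[OF assms(3) that] by (intro coset_join2[OF _ assms(3)]) auto
  moreover have "M \<in> rcosets M" using rcosetsI[OF Msub one_closed] Msub by simp
  ultimately have "M \<in> ?F" by blast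
  moreover have "finite ?F" using finE by simp
  ultimately have "card ?F > 0" using card_gt_0_iff by blast
  hence "card ?F > 1"
    using dvd_imp_le[OF \<open>p dvd card ?F\<close>] prime_gt_1_nat[OF assms(1)] by linarith
  have "\<not> ?F \<subseteq> {M}"
  proof
    assume "?F \<subseteq> {M}"
    hence "card ?F \<le> card {M}" by (intro card_mono) auto
    thus False using \<open>card ?F > 1\<close> by simp
  qed
  then obtain C where C: "C \<in> ?F" "C \<noteq> M" by blast
  moreover have "C #> h = C" if "h \<in> M" for h
  proof -
    have "C #> inv (inv h) = C" using C(1) subgroup.m_inv_closed[OF assms(3) that] by blast
    thus ?thesis using that Msub by auto
  qed
  ultimately show thesis using that by blast
qed

lemma (in group) p_group_exists_normalizing_element:
  assumes "prime p" "order G = p ^ n" "subgroup M G" "M \<noteq> carrier G"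
  obtains x where "x \<in> carrier G" "x \<notin> M" "\<And>m. m \<in> M \<Longrightarrow> x \<otimes> m \<otimes> inv x \<in> M"
proof -
  have Msub: "M \<subseteq> carrier G" using subgroup.subset[OF assms(3)] .
  obtain C where C: "C \<in> rcosets M" "C \<noteq> M" "\<And>h. h \<in> M \<Longrightarrow> C #> h = C"
    using p_group_exists_fixed_rcoset[OF assms] by blast
  then obtain x where x: "x \<in> carrier G" "C = M #> x" unfolding RCOSETS_def by blast
  show thesis
  proof (rule that[OF x(1)])
    show "x \<notin> M" using C(2) x coset_join2[OF x(1) assms(3)] by blast
    fix m assume m: "m \<in> M"
    have mc: "m \<in> carrier G" using m Msub by blast
    have "M #> (x \<otimes> m) = M #> x" using C(3)[OF m] x mc Msub by (simp add: coset_mult_assoc)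
    hence "x \<otimes> m \<in> M #> x" using rcos_self[OF _ assms(3), of "x \<otimes> m"] x(1) mc by simp
    then obtain h where h: "h \<in> M" "x \<otimes> m = h \<otimes> x" unfolding r_coset_def by blast
    have "x \<otimes> m \<otimes> inv x = h" using h x(1) mc Msub by (auto simp: m_assoc)
    thus "x \<otimes> m \<otimes> inv x \<in> M" using h by simp
  qed
qed

lemma (in group) p_group_maximal_subgroup_normal:
  assumes "prime p" "order G = p ^ n" "subgroup M G" "M \<noteq> carrier G"
    and maximal: "\<And>H. subgroup H G \<Longrightarrow> M \<subseteq> H \<Longrightarrow> H = M \<or> H = carrier G"
  shows "M \<lhd> G"
proof -
  have Msub: "M \<subseteq> carrier G" using subgroup.subset[OF assms(3)] .
  have normalizer_iff: "g \<in> normalizer G M \<longleftrightarrow> g \<in> carrier G \<and> g <# M #> inv g = M" for g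
    using Msub unfolding normalizer_def stabilizer_def by auto
  have conj: "g <# M #> inv g = (\<lambda>m. g \<otimes> m \<otimes> inv g) ` M" for g
    unfolding l_coset_def r_coset_def by auto
  have "M \<subseteq> normalizer G M"
    using Msub coset_join3[OF _ assms(3)] coset_join2[OF _ assms(3)]
    by (auto simp: normalizer_iff subgroup.m_inv_closed[OF assms(3)])
  moreover obtain x where x: "x \<in> carrier G" "x \<notin> M" "\<And>m. m \<in> M \<Longrightarrow> x \<otimes> m \<otimes> inv x \<in> M"
    using p_group_exists_normalizing_element[OF assms(1-4)] by blast
  moreover have "x \<in> normalizer G M"
  proof -
    have "inj_on (\<lambda>m. x \<otimes> m \<otimes> inv x) M"
    proof (rule inj_onI)
      fix a b assume "a \<in> M" "b \<in> M" "x \<otimes> a \<otimes> inv x = x \<otimes> b \<otimes> inv x"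
      thus "a = b" using x(1) Msub by (auto simp: m_assoc subset_iff)
    qed
    hence "card (x <# M #> inv x) = card M" by (simp add: conj card_image)
    moreover have "x <# M #> inv x \<subseteq> M" using x(3) by (auto simp: conj)
    moreover have "finite M" using prime_power_order_finite[OF assms(1,2)] Msub finite_subset by blast
    ultimately show ?thesis using x(1) card_subset_eq by (auto simp: normalizer_iff)
  qed
  ultimately have "normalizer G M = carrier G"
    using maximal[OF normalizer_imp_subgroup[OF Msub]] by blast
  show "M \<lhd> G"
  proof (rule normal_invI[OF assms(3)])
    fix g h assume "g \<in> carrier G" "h \<in> M"
    hence "(\<lambda>m. g \<otimes> m \<otimes> inv g) ` M = M"
      using \<open>normalizer G M = carrier G\<close> normalizer_iff conj by blast
    thus "g \<otimes> h \<otimes> inv g \<in> M" using \<open>h \<in> M\<close> by blast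
  qed
qed

lemma (in normal) factgroup_subgroup_trivial_or_all:
  assumes maximal: "\<And>K. subgroup K G \<Longrightarrow> H \<subseteq> K \<Longrightarrow> K = H \<or> K = carrier G"
    and A: "subgroup A (G Mod H)"
  shows "A = {\<one>\<^bsub>G Mod H\<^esub>} \<or> A = carrier (G Mod H)"
proof -
  have A_sub: "A \<subseteq> rcosets H" using subgroup.subset[OF A] by (simp add: FactGroup_def)
  have union: "\<Union>A = {x \<in> carrier G. H #> x \<in> A}" by (rule factgroup_subgroup_union_char[OF A])
  have "H \<in> A" using subgroup.one_closed[OF A] by simp
  hence "H \<subseteq> \<Union>A" by blast
  hence "\<Union>A = H \<or> \<Union>A = carrier G"
    by (rule maximal[OF factgroup_subgroup_union_subgroup[OF A]])
  thus ?thesis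
  proof
    assume "\<Union>A = H"
    have "C = H" if "C \<in> A" for C
    proof -
      have "C \<in> rcosets H" using A_sub \<open>C \<in> A\<close> by blast
      then obtain x where x: "x \<in> carrier G" "C = H #> x" unfolding RCOSETS_def by blast
      hence "x \<in> H" using \<open>\<Union>A = H\<close> union \<open>C \<in> A\<close> by blast
      thus ?thesis using x coset_join2[OF _ subgroup_axioms] by simp
    qed
    hence "A = {H}" using \<open>H \<in> A\<close> by blast
    thus ?thesis by simp
  next
    assume "\<Union>A = carrier G"
    hence "rcosets H \<subseteq> A" using union unfolding RCOSETS_def by blast
    thus ?thesis using A_sub by (simp add: FactGroup_def)
  qed
qed

lemma (in group) p_group_no_proper_subgroups_order:
  assumes "prime p" "order G = p ^ n" "carrier G \<noteq> {\<one>}"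
    and trivial_or_all: "\<And>H. subgroup H G \<Longrightarrow> H = {\<one>} \<or> H = carrier G"
  shows "order G = p"
proof -
  have "n \<noteq> 0"
  proof
    assume "n = 0"
    hence "card (carrier G) = 1" using assms(2) by (simp add: order_def)
    thus False using assms(3) one_closed by (metis card_1_singletonE singletonD)
  qed
  hence "order G = p ^ 1 * p ^ (n - 1)" using assms(2) by (cases n) auto
  from sylow_thm[OF assms(1) is_group this prime_power_order_finite[OF assms(1,2)]]
  obtain Q where Q: "subgroup Q G" "card Q = p" by auto
  have "Q \<noteq> {\<one>}" using Q(2) assms(1) by auto
  thus ?thesis using trivial_or_all[OF Q(1)] Q(2) by (simp add: order_def)
qed

lemma (in group) prime_order_cyclic:
  assumes "prime (order G)"
  shows "cyclic_group G"
proof -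
  have fin: "finite (carrier G)"
    using order_gt_0_iff_finite prime_gt_0_nat[OF assms] by simp
  have "\<not> carrier G \<subseteq> {\<one>}"
  proof
    assume "carrier G \<subseteq> {\<one>}"
    hence "order G \<le> 1" unfolding order_def using card_mono[of "{\<one>}" "carrier G"] by simp
    thus False using prime_gt_1_nat[OF assms] by simp
  qed
  then obtain g where g: "g \<in> carrier G" "g \<noteq> \<one>" by blast
  let ?H = "carrier (subgroup_generated G {g})"
  have H: "subgroup ?H G" by (rule subgroup_subgroup_generated)
  have Hsub: "?H \<subseteq> carrier G" using subgroup.subset[OF H] .
  have "{\<one>, g} \<subseteq> ?H"
    using subgroup.one_closed[OF H] subgroup_generated_subset_carrier_subset[of "{g}"] g(1) by auto
  hence "card {\<one>, g} \<le> card ?H" using finite_subset[OF Hsub fin] by (intro card_mono)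
  hence "card ?H \<noteq> 1" using g(2) by simp
  moreover have "card ?H dvd order G" using lagrange[OF H] by (metis dvd_triv_right)
  ultimately have "card ?H = card (carrier G)"
    using assms unfolding prime_nat_iff order_def by blast
  hence "?H = carrier G" using card_subset_eq[OF fin Hsub] by simp
  hence "carrier G = range (\<lambda>n::int. g [^] n)"
    using carrier_subgroup_generated_by_singleton[OF g(1)] by simp
  thus ?thesis unfolding cyclic_group using g(1) by blast
qed

lemma (in comm_group) commutator_eq_one:
  assumes "a \<in> carrier G" "b \<in> carrier G"
  shows "a \<otimes> b \<otimes> inv a \<otimes> inv b = \<one>"
proof -
  have "a \<otimes> b \<otimes> inv a \<otimes> inv b = (a \<otimes> b) \<otimes> inv (a \<otimes> b)"
    using assms by (simp add: m_assoc inv_mult)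
  thus ?thesis using assms by simp
qed

text \<open>\<open>G/N\<close> is abelian of exponent dividing \<open>p\<close>, phrased without forming the quotient.\<close>

definition elementary_abelian_quotient :: "('g, 'b) monoid_scheme \<Rightarrow> nat \<Rightarrow> 'g set \<Rightarrow> bool" where
  "elementary_abelian_quotient G p N \<longleftrightarrow> subgroup N G \<and>
     (\<forall>s\<in>carrier G. \<forall>t\<in>carrier G. s \<otimes>\<^bsub>G\<^esub> t \<otimes>\<^bsub>G\<^esub> inv\<^bsub>G\<^esub> s \<otimes>\<^bsub>G\<^esub> inv\<^bsub>G\<^esub> t \<in> N) \<and>
     (\<forall>t\<in>carrier G. t [^]\<^bsub>G\<^esub> p \<in> N)"

lemma (in group) elementary_abelian_quotient_Int:
  "elementary_abelian_quotient G p M \<Longrightarrow> elementary_abelian_quotient G p M'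
    \<Longrightarrow> elementary_abelian_quotient G p (M \<inter> M')"
  unfolding elementary_abelian_quotient_def by (auto intro: subgroups_Inter_pair)

lemma (in group) elementary_abelian_quotient_normal:
  assumes "elementary_abelian_quotient G p N"
  shows "N \<lhd> G"
proof (rule normal_invI)
  show N: "subgroup N G" using assms unfolding elementary_abelian_quotient_def by blast
  fix g h assume g: "g \<in> carrier G" and h: "h \<in> N"
  have hc: "h \<in> carrier G" using h subgroup.subset[OF N] by blast
  have "g \<otimes> h \<otimes> inv g \<otimes> inv h \<in> N"
    using assms g hc unfolding elementary_abelian_quotient_def by blast
  hence "g \<otimes> h \<otimes> inv g \<otimes> inv h \<otimes> h \<in> N" using h subgroup.m_closed[OF N] by blast
  thus "g \<otimes> h \<otimes> inv g \<in> N" using g hc by (simp add: m_assoc)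
qed

lemma (in group) p_group_maximal_subgroup_elementary_abelian:
  assumes "prime p" "order G = p ^ n" "subgroup M G" "M \<noteq> carrier G"
    and maximal: "\<And>H. subgroup H G \<Longrightarrow> M \<subseteq> H \<Longrightarrow> H = M \<or> H = carrier G"
  shows "elementary_abelian_quotient G p M"
proof -
  interpret N: normal M G using p_group_maximal_subgroup_normal[OF assms] .
  interpret Q: group "G Mod M" by (rule N.factorgroup_is_group)
  interpret h: group_hom G "G Mod M" "\<lambda>a. M #> a"
    unfolding group_hom_def group_hom_axioms_def using Q.is_group N.r_coset_hom_Mod is_group by blast
  have kernel: "a \<in> M" if "a \<in> carrier G" "M #> a = \<one>\<^bsub>G Mod M\<^esub>" for a
    using coset_join1[OF _ that(1) assms(3)] that(2) by simp
  obtain k where "card (rcosets M) = p ^ k" using card_rcosets_prime_power[OF assms(1-3)] by blast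
  hence order_k: "order (G Mod M) = p ^ k" by (simp add: order_def FactGroup_def)
  obtain g where "g \<in> carrier G" "g \<notin> M" using subgroup.subset[OF assms(3)] assms(4) by blast
  hence "M #> g \<in> carrier (G Mod M)" "M #> g \<noteq> \<one>\<^bsub>G Mod M\<^esub>" using kernel by auto
  hence nontrivial: "carrier (G Mod M) \<noteq> {\<one>\<^bsub>G Mod M\<^esub>}" by auto
  have order_p: "order (G Mod M) = p"
    using N.factgroup_subgroup_trivial_or_all[OF maximal]
    by (rule Q.p_group_no_proper_subgroups_order[OF assms(1) order_k nontrivial])
  interpret Qc: comm_group "G Mod M"
    using Q.cyclic_imp_abelian_group[OF Q.prime_order_cyclic] order_p assms(1) by simp
  show ?thesis unfolding elementary_abelian_quotient_def
  proof (intro conjI ballI)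
    fix s t assume s: "s \<in> carrier G" and t: "t \<in> carrier G"
    have "M #> (s \<otimes> t \<otimes> inv s \<otimes> inv t) =
        (M #> s) \<otimes>\<^bsub>G Mod M\<^esub> (M #> t) \<otimes>\<^bsub>G Mod M\<^esub> inv\<^bsub>G Mod M\<^esub> (M #> s) \<otimes>\<^bsub>G Mod M\<^esub> inv\<^bsub>G Mod M\<^esub> (M #> t)"
      using s t by (simp add: h.hom_mult h.hom_inv del: mult_FactGroup)
    also have "\<dots> = \<one>\<^bsub>G Mod M\<^esub>"
      using s t by (simp add: Qc.commutator_eq_one del: mult_FactGroup one_FactGroup)
    finally show "s \<otimes> t \<otimes> inv s \<otimes> inv t \<in> M" using s t by (intro kernel) auto
  next
    fix t assume t: "t \<in> carrier G"
    have "M #> (t [^] p) = (M #> t) [^]\<^bsub>G Mod M\<^esub> p" using N.FactGroup_pow[OF t, of p] by simp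
    also have "\<dots> = \<one>\<^bsub>G Mod M\<^esub>" using Q.pow_order_eq_1[of "M #> t"] order_p t by simp
    finally show "t [^] p \<in> M" using t by (intro kernel) auto
  qed (rule assms(3))
qed

lemma (in group) exists_maximal_subgroup:
  assumes "finite (carrier G)" "subgroup H G" "H \<noteq> carrier G"
  obtains M where "subgroup M G" "H \<subseteq> M" "M \<noteq> carrier G"
    "\<And>K. subgroup K G \<Longrightarrow> M \<subseteq> K \<Longrightarrow> K = M \<or> K = carrier G"
proof -
  let ?P = "\<lambda>M. subgroup M G \<and> H \<subseteq> M \<and> M \<noteq> carrier G"
  have "card M < Suc (card (carrier G))" if "?P M" for M
    using assms(1) subgroup.subset[of M G] that by (simp add: less_Suc_eq_le card_mono)
  hence "\<exists>M. ?P M \<and> (\<forall>K. ?P K \<longrightarrow> card K \<le> card M)"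
    using ex_has_greatest_nat[of ?P H card "Suc (card (carrier G))"] assms(2,3) by blast
  then obtain M where M: "?P M" and greatest: "\<And>K. ?P K \<Longrightarrow> card K \<le> card M" by blast
  show thesis
  proof (rule that)
    fix K assume K: "subgroup K G" "M \<subseteq> K"
    show "K = M \<or> K = carrier G"
    proof (cases "K = carrier G")
      case False
      hence "card K \<le> card M" using greatest K M by blast
      moreover have "finite K" using subgroup.subset[OF K(1)] assms(1) finite_subset by blast
      ultimately show ?thesis using card_seteq K(2) by blast
    qed simp
  qed (use M in auto)
qed

lemma (in group) p_group_proper_subgroup_le_elementary_abelian:
  assumes "prime p" "order G = p ^ n" "subgroup H G" "H \<noteq> carrier G"
  obtains M where "elementary_abelian_quotient G p M" "H \<subseteq> M" "M \<noteq> carrier G"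
proof -
  obtain M where "subgroup M G" "H \<subseteq> M" "M \<noteq> carrier G"
    "\<And>K. subgroup K G \<Longrightarrow> M \<subseteq> K \<Longrightarrow> K = M \<or> K = carrier G"
    using exists_maximal_subgroup[OF prime_power_order_finite[OF assms(1,2)] assms(3,4)] by blast
  thus thesis using that p_group_maximal_subgroup_elementary_abelian[OF assms(1,2)] by blast
qed

lemma (in group) noncyclic_p_group_elementary_abelian_quotient:
  assumes "prime p" "order G = p ^ n" "\<not> cyclic_group G"
  obtains N where "elementary_abelian_quotient G p N" "p < card (rcosets N)"
proof -
  have "{\<one>} \<noteq> carrier G"
    using assms(3) trivial_imp_cyclic_group is_group by (auto simp: trivial_group_def)
  then obtain M1 where M1: "elementary_abelian_quotient G p M1" "M1 \<noteq> carrier G"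
    using p_group_proper_subgroup_le_elementary_abelian[OF assms(1,2) triv_subgroup] by blast
  then obtain g where g: "g \<in> carrier G" "g \<notin> M1"
    unfolding elementary_abelian_quotient_def using subgroup.subset by blast
  let ?H = "carrier (subgroup_generated G {g})"
  have "?H \<noteq> carrier G"
    using assms(3) g(1) carrier_subgroup_generated_by_singleton[OF g(1)] unfolding cyclic_group by auto
  then obtain M2 where M2: "elementary_abelian_quotient G p M2" "?H \<subseteq> M2" "M2 \<noteq> carrier G"
    using p_group_proper_subgroup_le_elementary_abelian[OF assms(1,2) subgroup_subgroup_generated] by blast
  have "g \<in> M2" using M2(2) subgroup_generated_subset_carrier_subset[of "{g}"] g(1) by auto
  hence "M1 \<inter> M2 \<subset> M2" using g(2) by blast
  moreover have N: "elementary_abelian_quotient G p (M1 \<inter> M2)"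
    by (rule elementary_abelian_quotient_Int[OF M1(1) M2(1)])
  ultimately have "p < card (rcosets (M1 \<inter> M2))"
    using p_group_index_gt_prime[OF assms(1,2) _ _ _ M2(3)] M2(1)
    unfolding elementary_abelian_quotient_def by blast
  thus thesis using that[OF N] by blast
qed

section \<open>The Frobenius identity for commuting linear maps\<close>

definition fun_linear :: "(('a \<Rightarrow> 'k::field) \<Rightarrow> ('a \<Rightarrow> 'k)) \<Rightarrow> bool" where
  "fun_linear X \<longleftrightarrow> (\<forall>a b. X (\<lambda>x. a x + b x) = (\<lambda>x. X a x + X b x)) \<and>
     (\<forall>c a. X (\<lambda>x. c * a x) = (\<lambda>x. c * X a x))"

lemma fun_linear_sum:
  assumes "fun_linear X"
  shows "X (\<lambda>x. \<Sum>k\<in>A. c k * f k x) = (\<lambda>x. \<Sum>k\<in>A. c k * X (f k) x)"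
proof -
  have add: "X (\<lambda>x. a x + b x) = (\<lambda>x. X a x + X b x)" and smult: "X (\<lambda>x. d * a x) = (\<lambda>x. d * X a x)"
    for a b d using assms unfolding fun_linear_def by blast+
  have zero: "X (\<lambda>x. 0) = (\<lambda>x. 0)" using smult[of 0 "\<lambda>x. 0"] by simp
  show ?thesis
  proof (induction A rule: infinite_finite_induct)
    case (insert k A)
    thus ?case using add[of "\<lambda>x. c k * f k x"] smult[of "c k" "f k"] by simp
  qed (simp_all add: zero)
qed

lemma sum_choose_pascal:
  "(\<Sum>k\<le>n. of_nat (n choose k) * (g (Suc k) + g k)) =
   (\<Sum>k\<le>Suc n. of_nat (Suc n choose k) * (g k :: 'a::comm_semiring_1))"
proof -
  have "(\<Sum>k\<le>Suc n. of_nat (n choose k) * g k) = (\<Sum>k\<le>n. of_nat (n choose k) * g k)"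
    by (simp add: binomial_eq_0)
  moreover have "(\<Sum>k\<le>Suc n. of_nat (n choose k) * g k) =
      g 0 + (\<Sum>k\<le>n. of_nat (n choose Suc k) * g (Suc k))"
    by (subst sum.atMost_Suc_shift) simp
  moreover have "(\<Sum>k\<le>Suc n. of_nat (Suc n choose k) * g k) =
      g 0 + (\<Sum>k\<le>n. of_nat (n choose k) * g (Suc k)) + (\<Sum>k\<le>n. of_nat (n choose Suc k) * g (Suc k))"
    by (subst sum.atMost_Suc_shift) (simp add: sum.distrib distrib_right add_ac)
  ultimately show ?thesis by (simp add: sum.distrib distrib_left add_ac)
qed

lemma fun_linear_binomial:
  assumes X: "fun_linear X" and Y: "fun_linear Y"
    and XW: "\<And>b. b \<in> W \<Longrightarrow> X b \<in> W" and YW: "\<And>b. b \<in> W \<Longrightarrow> Y b \<in> W"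
    and XY: "\<And>b. b \<in> W \<Longrightarrow> X (Y b) = Y (X b)" and a: "a \<in> W"
  shows "((\<lambda>b x. X b x + Y b x) ^^ n) a =
    (\<lambda>x. \<Sum>k\<le>n. of_nat (n choose k) * (X ^^ k) ((Y ^^ (n - k)) a) x)"
proof (induction n)
  case (Suc n)
  let ?B = "\<lambda>m k. (X ^^ k) ((Y ^^ (m - k)) a)"
  have YW_pow: "(Y ^^ m) a \<in> W" for m by (induction m) (simp_all add: a YW)
  have Y_X_pow: "(X ^^ k) b \<in> W \<and> Y ((X ^^ k) b) = (X ^^ k) (Y b)" if "b \<in> W" for k b
    by (induction k) (simp_all add: that XW XY[symmetric])
  have "((\<lambda>b x. X b x + Y b x) ^^ Suc n) a =
      (\<lambda>x. X (\<lambda>x. \<Sum>k\<le>n. of_nat (n choose k) * ?B n k x) x + Y (\<lambda>x. \<Sum>k\<le>n. of_nat (n choose k) * ?B n k x) x)"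
    using Suc by simp
  also have "\<dots> = (\<lambda>x. (\<Sum>k\<le>n. of_nat (n choose k) * X (?B n k) x) + (\<Sum>k\<le>n. of_nat (n choose k) * Y (?B n k) x))"
    by (simp only: fun_linear_sum[OF X] fun_linear_sum[OF Y])
  also have "\<dots> = (\<lambda>x. \<Sum>k\<le>n. of_nat (n choose k) * (?B (Suc n) (Suc k) x + ?B (Suc n) k x))"
  proof -
    have "Y (?B n k) = ?B (Suc n) k" if "k \<le> n" for k
      using Y_X_pow[OF YW_pow, of k "n - k"] that by (simp add: Suc_diff_le)
    thus ?thesis by (simp add: distrib_left sum.distrib)
  qed
  also have "\<dots> = (\<lambda>x. \<Sum>k\<le>Suc n. of_nat (Suc n choose k) * ?B (Suc n) k x)"
  proof
    fix x show "(\<Sum>k\<le>n. of_nat (n choose k) * (?B (Suc n) (Suc k) x + ?B (Suc n) k x)) =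
        (\<Sum>k\<le>Suc n. of_nat (Suc n choose k) * ?B (Suc n) k x)"
      by (fact sum_choose_pascal[of n "\<lambda>k. ?B (Suc n) k x"])
  qed
  finally show ?case .
qed simp

lemma sum_choose_prime_char:
  assumes "prime p" "CHAR('a::comm_semiring_1) = p"
  shows "(\<Sum>k\<le>p. of_nat (p choose k) * g k) = g 0 + (g p :: 'a)"
proof -
  have "(\<Sum>k\<le>p. of_nat (p choose k) * g k) = (\<Sum>k\<in>{0, p}. of_nat (p choose k) * g k)"
  proof (intro sum.mono_neutral_right ballI)
    fix k assume "k \<in> {..p} - {0, p}"
    hence "p dvd (p choose k)" using assms(1) by (intro dvd_choose_prime) auto
    hence "(of_nat (p choose k) :: 'a) = 0" using assms(2) of_nat_eq_0_iff_char_dvd by blast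
    thus "of_nat (p choose k) * g k = 0" by simp
  qed auto
  thus ?thesis using assms(1) prime_gt_0_nat by fastforce
qed

lemma fun_linear_freshmans_dream:
  fixes X Y :: "('a \<Rightarrow> 'k::field) \<Rightarrow> ('a \<Rightarrow> 'k)"
  assumes "fun_linear X" "fun_linear Y"
    and "\<And>b. b \<in> W \<Longrightarrow> X b \<in> W" "\<And>b. b \<in> W \<Longrightarrow> Y b \<in> W"
    and "\<And>b. b \<in> W \<Longrightarrow> X (Y b) = Y (X b)" "a \<in> W"
    and "prime p" "CHAR('k) = p"
  shows "((\<lambda>b x. X b x + Y b x) ^^ p) a = (\<lambda>x. (X ^^ p) a x + (Y ^^ p) a x)"
  using fun_linear_binomial[OF assms(1-6), of p]
    sum_choose_prime_char[OF assms(7,8), of "\<lambda>k. (X ^^ k) ((Y ^^ (p - k)) a) _"]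
  by (simp add: fun_eq_iff add.commute)

lemma card_kernel_funpow_le:
  fixes f :: "'v::ab_group_add \<Rightarrow> 'v"
  assumes "finite W" "0 \<in> W" "\<And>a. a \<in> W \<Longrightarrow> f a \<in> W"
    and "\<And>a b. a \<in> W \<Longrightarrow> b \<in> W \<Longrightarrow> a - b \<in> W"
    and "\<And>a b. a \<in> W \<Longrightarrow> b \<in> W \<Longrightarrow> f (a - b) = f a - f b"
  shows "card {a \<in> W. (f ^^ m) a = 0} \<le> card {a \<in> W. f a = 0} ^ m"
proof (induction m)
  case 0
  have "{a \<in> W. (f ^^ 0) a = 0} = {0}" using assms(2) by auto
  thus ?case by simp
next
  case (Suc m)
  let ?K = "{a \<in> W. f a = 0}" and ?Km = "{a \<in> W. (f ^^ m) a = 0}"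
    and ?Kn = "{a \<in> W. (f ^^ Suc m) a = 0}"
  have finKn: "finite ?Kn" using assms(1) by simp
  have fiber: "card {a \<in> ?Kn. f a = b} \<le> card ?K" for b
  proof (cases "\<exists>a0 \<in> ?Kn. f a0 = b")
    case True
    then obtain a0 where a0: "a0 \<in> ?Kn" "f a0 = b" by blast
    have image: "(\<lambda>a. a - a0) ` {a \<in> ?Kn. f a = b} \<subseteq> ?K"
    proof
      fix c assume "c \<in> (\<lambda>a. a - a0) ` {a \<in> ?Kn. f a = b}"
      then obtain a where "a \<in> ?Kn" "f a = b" "c = a - a0" by blast
      thus "c \<in> ?K" using a0 assms(4,5) by simp
    qed
    have inj: "inj_on (\<lambda>a. a - a0) {a \<in> ?Kn. f a = b}" by (rule inj_onI) simp
    have "finite ?K" using assms(1) by simp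
    thus ?thesis by (rule card_inj_on_le[OF inj image])
  next
    case False
    hence "{a \<in> ?Kn. f a = b} = {}" by blast
    thus ?thesis by (simp only: card.empty zero_le)
  qed
  have "f ` ?Kn \<subseteq> ?Km" using assms(3) by (auto simp: funpow_swap1)
  have "card ?Kn = (\<Sum>b\<in>f ` ?Kn. card {a \<in> ?Kn. f a = b})"
    using sum.image_gen[OF finKn, of "\<lambda>_. 1::nat" f] by simp
  also have "\<dots> \<le> card (f ` ?Kn) * card ?K" using sum_bounded_above[OF fiber] by simp
  also have "\<dots> \<le> card ?Km * card ?K"
    using \<open>f ` ?Kn \<subseteq> ?Km\<close> assms(1) by (simp add: card_mono)
  also have "\<dots> \<le> card ?K ^ m * card ?K" using Suc.IH by simp
  finally show ?case by (simp add: mult.commute)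
qed

section \<open>The group algebra\<close>

text \<open>The right \<open>N\<close>-invariant elements of \<open>KT\<close>; for normal \<open>N\<close> a copy of \<open>K[T/N]\<close>.\<close>

definition ga_invariant :: "('g, 'b) monoid_scheme \<Rightarrow> 'g set \<Rightarrow> ('g \<Rightarrow> 'k::field) set" where
  "ga_invariant G N = {a \<in> group_algebra G. \<forall>x\<in>carrier G. \<forall>n\<in>N. a (x \<otimes>\<^bsub>G\<^esub> n) = a x}"

text \<open>Adding the points of \<open>B\<close> one at a
  time writes left multiplication by \<open>v\<close> as a sum of operators that commute on \<open>ga_invariant G N\<close>.\<close>

definition ga_mult_on :: "('g, 'b) monoid_scheme \<Rightarrow> 'g set \<Rightarrow> ('g \<Rightarrow> 'k::field) \<Rightarrow> ('g \<Rightarrow> 'k) \<Rightarrow> ('g \<Rightarrow> 'k)" where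
  "ga_mult_on G B v a = (\<lambda>x. if x \<in> carrier G then \<Sum>y\<in>B. v y * a (inv\<^bsub>G\<^esub> y \<otimes>\<^bsub>G\<^esub> x) else 0)"

lemma ga_mult_eq_ga_mult_on: "ga_mult G v = ga_mult_on G (carrier G) v"
  by (simp add: fun_eq_iff ga_mult_def ga_mult_on_def)

lemma fun_linear_ga_mult_on: "fun_linear (ga_mult_on G B v)"
  unfolding fun_linear_def ga_mult_on_def
  by (auto simp: fun_eq_iff distrib_left sum.distrib sum_distrib_left mult_ac)

lemma ga_mult_on_insert:
  assumes "finite B" "z \<notin> B"
  shows "ga_mult_on G (insert z B) v = (\<lambda>b x. ga_mult_on G B v b x + ga_mult_on G {z} v b x)"
  using assms by (auto simp: fun_eq_iff ga_mult_on_def)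

lemma (in group) ga_mult_on_invariant:
  assumes "subgroup N G" "B \<subseteq> carrier G" "a \<in> ga_invariant G N"
  shows "ga_mult_on G B v a \<in> ga_invariant G N"
proof -
  have "ga_mult_on G B v a (x \<otimes> n) = ga_mult_on G B v a x" if x: "x \<in> carrier G" and n: "n \<in> N" for x n
  proof -
    have nc: "n \<in> carrier G" using n subgroup.subset[OF assms(1)] by blast
    have "a (inv y \<otimes> (x \<otimes> n)) = a (inv y \<otimes> x)" if "y \<in> B" for y
    proof -
      have "inv y \<otimes> x \<in> carrier G" using that assms(2) x by blast
      hence "a (inv y \<otimes> x \<otimes> n) = a (inv y \<otimes> x)" using assms(3) n unfolding ga_invariant_def by blast
      thus ?thesis using that assms(2) x nc by (simp add: m_assoc subset_iff)
    qed
    thus ?thesis using x nc unfolding ga_mult_on_def by simp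
  qed
  moreover have "ga_mult_on G B v a \<in> group_algebra G"
    unfolding group_algebra_def ga_mult_on_def by simp
  ultimately show ?thesis unfolding ga_invariant_def by blast
qed

lemma (in group) ga_invariant_left_translate:
  assumes "N \<lhd> G" "a \<in> ga_invariant G N" "n \<in> N" "x \<in> carrier G"
  shows "a (n \<otimes> x) = a x"
proof -
  have nc: "n \<in> carrier G" using assms(1,3) normal_imp_subgroup subgroup.subset by blast
  have "inv x \<otimes> n \<otimes> inv (inv x) \<in> N" using normal_invE(2)[OF assms(1)] assms(3,4) by blast
  hence "a (x \<otimes> (inv x \<otimes> n \<otimes> x)) = a x" using assms(2,4) unfolding ga_invariant_def by simp
  thus ?thesis using nc assms(4) by (simp add: m_assoc[symmetric])
qed

lemma (in group) ga_invariant_left_translate_commute: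
  assumes "elementary_abelian_quotient G p N" "a \<in> ga_invariant G N"
    and "s \<in> carrier G" "t \<in> carrier G" "x \<in> carrier G"
  shows "a (t \<otimes> (s \<otimes> x)) = a (s \<otimes> (t \<otimes> x))"
proof -
  have "t \<otimes> s \<otimes> inv t \<otimes> inv s \<in> N"
    using assms(1,3,4) unfolding elementary_abelian_quotient_def by blast
  moreover have "t \<otimes> (s \<otimes> x) = t \<otimes> s \<otimes> inv t \<otimes> inv s \<otimes> (s \<otimes> (t \<otimes> x))"
    using assms(3-5) by (simp add: m_assoc inv_solve_left inv_solve_left')
  ultimately show ?thesis
    using ga_invariant_left_translate[OF elementary_abelian_quotient_normal[OF assms(1)] assms(2)] assms(3-5)
    by simp
qed

lemma (in group) ga_invariant_left_translate_pow:
  assumes "elementary_abelian_quotient G p N" "a \<in> ga_invariant G N" "z \<in> carrier G" "x \<in> carrier G"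
  shows "a (inv (z [^] p) \<otimes> x) = a x"
proof -
  have "subgroup N G" "z [^] p \<in> N" using assms(1,3) unfolding elementary_abelian_quotient_def by blast+
  hence "inv (z [^] p) \<in> N" by (rule subgroup.m_inv_closed)
  thus ?thesis
    using ga_invariant_left_translate[OF elementary_abelian_quotient_normal[OF assms(1)] assms(2)] assms(4)
    by blast
qed

lemma (in group) ga_mult_on_commute:
  assumes "elementary_abelian_quotient G p N" "B \<subseteq> carrier G" "z \<in> carrier G" "a \<in> ga_invariant G N"
  shows "ga_mult_on G B v (ga_mult_on G {z} v a) = ga_mult_on G {z} v (ga_mult_on G B v a)"
proof
  fix x
  show "ga_mult_on G B v (ga_mult_on G {z} v a) x = ga_mult_on G {z} v (ga_mult_on G B v a) x"
  proof (cases "x \<in> carrier G")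
    case True
    have swap: "a (inv z \<otimes> (inv y \<otimes> x)) = a (inv y \<otimes> (inv z \<otimes> x))" if "y \<in> B" for y
      using that assms(2,3) True by (intro ga_invariant_left_translate_commute[OF assms(1,4)]) auto
    have "ga_mult_on G B v (ga_mult_on G {z} v a) x = (\<Sum>y\<in>B. v y * (v z * a (inv z \<otimes> (inv y \<otimes> x))))"
      using True assms(2) unfolding ga_mult_on_def by (auto intro!: sum.cong)
    also have "\<dots> = (\<Sum>y\<in>B. v y * (v z * a (inv y \<otimes> (inv z \<otimes> x))))"
      by (rule sum.cong) (simp_all add: swap)
    also have "\<dots> = ga_mult_on G {z} v (ga_mult_on G B v a) x"
      using True assms(3) unfolding ga_mult_on_def by (simp add: sum_distrib_left mult.left_commute)
    finally show ?thesis .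
  qed (simp add: ga_mult_on_def)
qed

lemma (in group) ga_mult_on_singleton_funpow:
  assumes "a \<in> group_algebra G" "z \<in> carrier G"
  shows "(ga_mult_on G {z} v ^^ k) a =
    (\<lambda>x. if x \<in> carrier G then v z ^ k * a (inv (z [^] k) \<otimes> x) else 0)"
proof (induction k)
  case 0
  thus ?case using assms(1) by (auto simp: fun_eq_iff group_algebra_def)
next
  case (Suc k)
  have "inv (z [^] Suc k) = inv (z [^] k) \<otimes> inv z"
    using assms(2) by (simp only: nat_pow_Suc2 inv_mult_group nat_pow_closed)
  hence "inv (z [^] Suc k) \<otimes> x = inv (z [^] k) \<otimes> (inv z \<otimes> x)" if "x \<in> carrier G" for x
    using assms(2) that by (simp add: m_assoc)
  thus ?case using Suc assms(2) by (auto simp: fun_eq_iff ga_mult_on_def)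
qed

lemma (in group) ga_mult_on_funpow_prime:
  fixes v :: "'a \<Rightarrow> 'k::field"
  assumes "prime p" "CHAR('k) = p" "elementary_abelian_quotient G p N"
    and "finite B" "B \<subseteq> carrier G" "a \<in> ga_invariant G N"
  shows "(ga_mult_on G B v ^^ p) a = (\<lambda>x. (\<Sum>y\<in>B. v y ^ p) * a x)"
  using assms(4,5)
proof (induction B rule: finite_induct)
  case empty
  obtain q where "p = Suc q" using assms(1) prime_gt_0_nat gr0_implies_Suc by blast
  moreover have "ga_mult_on G {} v = (\<lambda>b x. 0)" by (simp add: fun_eq_iff ga_mult_on_def)
  ultimately show ?case by simp
next
  case (insert z B)
  have N: "subgroup N G" using assms(3) unfolding elementary_abelian_quotient_def by blast
  have z: "z \<in> carrier G" and B: "B \<subseteq> carrier G" using insert.prems by auto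
  have "(ga_mult_on G (insert z B) v ^^ p) a =
      ((\<lambda>b x. ga_mult_on G B v b x + ga_mult_on G {z} v b x) ^^ p) a"
    by (simp only: ga_mult_on_insert[OF insert(1,2)])
  also have "\<dots> = (\<lambda>x. (ga_mult_on G B v ^^ p) a x + (ga_mult_on G {z} v ^^ p) a x)"
  proof (rule fun_linear_freshmans_dream[OF fun_linear_ga_mult_on fun_linear_ga_mult_on _ _ _ assms(6,1,2)])
    show "ga_mult_on G B v b \<in> ga_invariant G N" if "b \<in> ga_invariant G N" for b
      using ga_mult_on_invariant[OF N B that] .
    show "ga_mult_on G {z} v b \<in> ga_invariant G N" if "b \<in> ga_invariant G N" for b
      using ga_mult_on_invariant[OF N _ that] z by blast
    show "ga_mult_on G B v (ga_mult_on G {z} v b) = ga_mult_on G {z} v (ga_mult_on G B v b)"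
      if "b \<in> ga_invariant G N" for b
      using ga_mult_on_commute[OF assms(3) B z that] .
  qed
  also have "\<dots> = (\<lambda>x. (\<Sum>y\<in>insert z B. v y ^ p) * a x)"
  proof
    fix x
    have a: "a \<in> group_algebra G" using assms(6) unfolding ga_invariant_def by blast
    hence "(ga_mult_on G {z} v ^^ p) a x = v z ^ p * a x"
      using ga_invariant_left_translate_pow[OF assms(3,6) z]
      unfolding ga_mult_on_singleton_funpow[OF a z] by (auto simp: group_algebra_def)
    thus "(ga_mult_on G B v ^^ p) a x + (ga_mult_on G {z} v ^^ p) a x = (\<Sum>y\<in>insert z B. v y ^ p) * a x"
      using insert.IH B insert(1,2) by (simp add: distrib_right)
  qed
  finally show ?case .
qed

lemma group_algebra_finite:
  assumes "finite (carrier G)" "finite (UNIV :: 'k set)"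
  shows "finite (group_algebra G :: ('g \<Rightarrow> 'k::field) set)"
proof -
  have "group_algebra G = {f :: 'g \<Rightarrow> 'k. \<forall>x. (x \<in> carrier G \<longrightarrow> f x \<in> UNIV) \<and> (x \<notin> carrier G \<longrightarrow> f x = 0)}"
    unfolding group_algebra_def by auto
  thus ?thesis using finite_set_of_finite_funs[OF assms] by simp
qed

lemma ga_invariant_finite:
  assumes "finite (carrier G)" "finite (UNIV :: 'k set)"
  shows "finite (ga_invariant G N :: ('g \<Rightarrow> 'k::field) set)"
  by (rule finite_subset[OF _ group_algebra_finite[OF assms]]) (auto simp: ga_invariant_def)

lemma (in group) card_ga_invariant_ge:
  assumes "subgroup N G" "finite (carrier G)" "finite (UNIV :: 'k::field set)"
  shows "card (UNIV :: 'k set) ^ card (rcosets N) \<le> card (ga_invariant G N :: ('a \<Rightarrow> 'k) set)"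
proof -
  have Nsub: "N \<subseteq> carrier G" using subgroup.subset[OF assms(1)] .
  \<comment> \<open>the left coset \<open>x N\<close> is represented by the right coset \<open>N x\<inverse>\<close>\<close>
  define F where "F = (\<lambda>f :: 'a set \<Rightarrow> 'k. \<lambda>x. if x \<in> carrier G then f (N #> inv x) else 0)"
  let ?P = "PiE (rcosets N) (\<lambda>_. UNIV :: 'k set)"
  have F: "F f \<in> ga_invariant G N" for f
  proof -
    have "N #> inv (x \<otimes> n) = N #> inv x" if x: "x \<in> carrier G" and n: "n \<in> N" for x n
    proof -
      have nc: "n \<in> carrier G" using n Nsub by blast
      have "N #> inv n = N" using coset_join2[OF _ assms(1)] subgroup.m_inv_closed[OF assms(1) n] nc by simp
      thus ?thesis using x nc Nsub by (simp add: inv_mult_group coset_mult_assoc[symmetric])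
    qed
    thus ?thesis using Nsub unfolding F_def ga_invariant_def group_algebra_def by auto
  qed
  have inj: "inj_on F ?P"
  proof (rule inj_onI)
    fix f1 f2 assume f: "f1 \<in> ?P" "f2 \<in> ?P" "F f1 = F f2"
    show "f1 = f2"
    proof (rule PiE_ext[OF f(1,2)])
      fix R assume "R \<in> rcosets N"
      then obtain y where y: "y \<in> carrier G" "R = N #> y" unfolding RCOSETS_def by blast
      have "F f1 (inv y) = F f2 (inv y)" using f(3) by simp
      thus "f1 R = f2 R" using y unfolding F_def by simp
    qed
  qed
  have "finite (rcosets N)" using assms(2) by (simp add: RCOSETS_def)
  hence "card (UNIV :: 'k set) ^ card (rcosets N) = card ?P" by (simp add: card_PiE)
  also have "\<dots> = card (F ` ?P)" using card_image[OF inj] by simp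
  also have "\<dots> \<le> card (ga_invariant G N :: ('a \<Rightarrow> 'k) set)"
    by (rule card_mono[OF ga_invariant_finite[OF assms(2,3)]]) (use F in blast)
  finally show ?thesis .
qed

lemma (in group) ga_mult_funpow_prime_eq_zero:
  fixes v :: "'a \<Rightarrow> 'k::field"
  assumes "prime p" "CHAR('k) = p" "elementary_abelian_quotient G p N" "finite (carrier G)"
    and "(\<Sum>y\<in>carrier G. v y) = 0" "a \<in> ga_invariant G N"
  shows "(ga_mult G v ^^ p) a = 0"
proof -
  have "(\<Sum>y\<in>carrier G. v y ^ p) = (\<Sum>y\<in>carrier G. v y) ^ p"
    using freshmans_dream_sum assms(1,2) by metis
  thus ?thesis
    using ga_mult_on_funpow_prime[OF assms(1-4) subset_refl assms(6)] assms(5) prime_gt_0_nat[OF assms(1)]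
    by (simp add: ga_mult_eq_ga_mult_on zero_fun_def zero_power)
qed

lemma (in group) card_ga_invariant_le_kernel_pow:
  fixes v :: "'a \<Rightarrow> 'k::field"
  assumes "subgroup N G" "finite (carrier G)" "finite (UNIV :: 'k set)"
    and nilpotent: "\<And>a. a \<in> ga_invariant G N \<Longrightarrow> (ga_mult G v ^^ m) a = 0"
  shows "card (ga_invariant G N :: ('a \<Rightarrow> 'k) set) \<le> card {a \<in> ga_invariant G N. ga_mult G v a = 0} ^ m"
proof -
  let ?W = "ga_invariant G N :: ('a \<Rightarrow> 'k) set"
  have "?W = {a \<in> ?W. (ga_mult G v ^^ m) a = 0}" using nilpotent by blast
  also have "card \<dots> \<le> card {a \<in> ?W. ga_mult G v a = 0} ^ m"
  proof (rule card_kernel_funpow_le[OF ga_invariant_finite[OF assms(2,3)]])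
    show "0 \<in> ?W" by (simp add: ga_invariant_def group_algebra_def zero_fun_def)
    show "ga_mult G v a \<in> ?W" if "a \<in> ?W" for a
      using ga_mult_on_invariant[OF assms(1) subset_refl that] by (simp add: ga_mult_eq_ga_mult_on)
    show "a - b \<in> ?W" if "a \<in> ?W" "b \<in> ?W" for a b
      using that by (simp add: ga_invariant_def group_algebra_def fun_diff_def)
    show "ga_mult G v (a - b) = ga_mult G v a - ga_mult G v b" for a b
      by (simp add: fun_eq_iff ga_mult_def sum_subtractf right_diff_distrib)
  qed
  finally show ?thesis .
qed

lemma (in group) right_annihilator_ne_sum_ideal:
  fixes v :: "'a \<Rightarrow> 'k::field"
  assumes "finite (UNIV :: 'k set)" "prime p" "CHAR('k) = p" "finite (carrier G)"
    and "elementary_abelian_quotient G p N" "p < card (rcosets N)"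
  shows "{a \<in> group_algebra G. ga_mult G v a = (\<lambda>_. 0)} \<noteq> {(\<lambda>x. c * ga_sum_elem G x) | c :: 'k. True}"
proof
  assume I: "{a \<in> group_algebra G. ga_mult G v a = (\<lambda>_. 0)} = {(\<lambda>x. c * ga_sum_elem G x) | c :: 'k. True}"
  let ?W = "ga_invariant G N :: ('a \<Rightarrow> 'k) set" and ?q = "card (UNIV :: 'k set)"
  have N: "subgroup N G" using assms(5) unfolding elementary_abelian_quotient_def by blast
  have "(\<lambda>x. 1 * ga_sum_elem G x) \<in> {a \<in> group_algebra G. ga_mult G v a = (\<lambda>_. 0)}" using I by blast
  hence "ga_mult G v (ga_sum_elem G) \<one> = 0" by simp
  hence "(\<Sum>y\<in>carrier G. v y) = 0" by (simp add: ga_mult_def ga_sum_elem_def)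
  hence "card ?W \<le> card {a \<in> ?W. ga_mult G v a = 0} ^ p"
    using ga_mult_funpow_prime_eq_zero[OF assms(2,3,5,4)]
    by (intro card_ga_invariant_le_kernel_pow[OF N assms(4,1)])
  also have "\<dots> \<le> ?q ^ p"
  proof (rule power_mono)
    have "{a \<in> ?W. ga_mult G v a = 0} \<subseteq> (\<lambda>c x. c * ga_sum_elem G x) ` UNIV"
      using I unfolding ga_invariant_def zero_fun_def by blast
    hence "card {a \<in> ?W. ga_mult G v a = 0} \<le> card ((\<lambda>c x. c * ga_sum_elem G x) ` (UNIV :: 'k set))"
      using assms(1) by (intro card_mono finite_imageI)
    also have "\<dots> \<le> ?q" using card_image_le[OF assms(1)] .
    finally show "card {a \<in> ?W. ga_mult G v a = 0} \<le> ?q" .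
  qed simp
  also have "\<dots> < ?q ^ card (rcosets N)"
  proof (rule power_strict_increasing[OF assms(6)])
    have "card {0 :: 'k, 1} \<le> ?q" using assms(1) by (intro card_mono) auto
    thus "1 < ?q" by simp
  qed
  finally show False using card_ga_invariant_ge[OF N assms(4,1)] by simp
qed

lemma (in group) left_translation_invariant_eq_const:
  assumes "g \<in> carrier G" "carrier G = range (\<lambda>n::int. g [^] n)" "a \<in> group_algebra G"
    and invariant: "\<And>x. x \<in> carrier G \<Longrightarrow> a (g \<otimes> x) = a x"
  shows "a = (\<lambda>x. a \<one> * ga_sum_elem G x)"
proof -
  let ?S = "{h \<in> carrier G. \<forall>x\<in>carrier G. a (h \<otimes> x) = a x}"
  have S: "subgroup ?S G"
  proof (rule subgroupI)
    show "?S \<noteq> {}" using one_closed by auto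
    fix h k assume h: "h \<in> ?S" and k: "k \<in> ?S"
    have "a (inv h \<otimes> x) = a x" if x: "x \<in> carrier G" for x
    proof -
      have "a (h \<otimes> (inv h \<otimes> x)) = a (inv h \<otimes> x)" using h x by simp
      thus ?thesis using h x by (simp add: m_assoc[symmetric])
    qed
    thus "inv h \<in> ?S" using h by simp
    show "h \<otimes> k \<in> ?S" using h k by (auto simp: m_assoc)
  qed auto
  have "g \<in> ?S" using assms(1) invariant by blast
  hence "carrier (subgroup_generated G {g}) \<subseteq> ?S" using subgroup_generated_minimal[OF S] by blast
  hence "carrier G \<subseteq> ?S" using assms(2) carrier_subgroup_generated_by_singleton[OF assms(1)] by simp
  have const: "a x = a \<one>" if "x \<in> carrier G" for x
  proof -
    have "a (x \<otimes> \<one>) = a \<one>" using \<open>carrier G \<subseteq> ?S\<close> that by blast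
    thus ?thesis using that by simp
  qed
  show ?thesis
  proof
    fix x show "a x = a \<one> * ga_sum_elem G x"
      using const[of x] assms(3) by (cases "x \<in> carrier G") (simp_all add: group_algebra_def ga_sum_elem_def)
  qed
qed

lemma (in group) cyclic_sum_ideal_checkable:
  assumes "cyclic_group G" "finite (carrier G)"
  shows "checkable G {(\<lambda>x. c * ga_sum_elem G x) | c :: 'k::field. True}"
proof -
  obtain g where g: "g \<in> carrier G" and gen: "carrier G = range (\<lambda>n::int. g [^] n)"
    using assms(1) unfolding cyclic_group by blast
  define v :: "'a \<Rightarrow> 'k" where "v = (\<lambda>y. (if y = \<one> then 1 else 0) - (if y = g then 1 else 0))"
  have v: "v \<in> group_algebra G" unfolding group_algebra_def v_def using g by auto
  have mult_v: "ga_mult G v a x = a x - a (inv g \<otimes> x)" if "x \<in> carrier G" for a x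
  proof -
    have "v y * a (inv y \<otimes> x) =
        (if y = \<one> then a (inv y \<otimes> x) else 0) - (if y = g then a (inv y \<otimes> x) else 0)" for y
      by (cases "y = \<one>"; cases "y = g") (simp_all add: v_def)
    hence "(\<Sum>y\<in>carrier G. v y * a (inv y \<otimes> x)) =
        (\<Sum>y\<in>carrier G. if y = \<one> then a (inv y \<otimes> x) else 0) - (\<Sum>y\<in>carrier G. if y = g then a (inv y \<otimes> x) else 0)"
      by (simp only: sum_subtractf)
    thus ?thesis using that g assms(2) by (simp add: ga_mult_def sum.delta)
  qed
  show ?thesis unfolding checkable_def
  proof (intro bexI[OF _ v] equalityI subsetI)
    fix a assume "a \<in> {(\<lambda>x. c * ga_sum_elem G x) | c :: 'k. True}"
    then obtain c where c: "a = (\<lambda>x. c * ga_sum_elem G x)" by blast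
    have "ga_mult G v a x = 0" for x
      using mult_v[of x a] g by (cases "x \<in> carrier G") (simp_all add: c ga_sum_elem_def ga_mult_def)
    moreover have "a \<in> group_algebra G" unfolding c group_algebra_def ga_sum_elem_def by simp
    ultimately show "a \<in> {a \<in> group_algebra G. ga_mult G v a = (\<lambda>_. 0)}" by auto
  next
    fix a assume "a \<in> {a \<in> group_algebra G. ga_mult G v a = (\<lambda>_. 0)}"
    hence a: "a \<in> group_algebra G" and av: "ga_mult G v a = (\<lambda>_. 0)" by auto
    have "a (g \<otimes> x) = a x" if "x \<in> carrier G" for x
      using mult_v[of "g \<otimes> x" a] av g that by (simp add: m_assoc[symmetric])
    hence "a = (\<lambda>x. a \<one> * ga_sum_elem G x)" by (rule left_translation_invariant_eq_const[OF g gen a])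
    thus "a \<in> {(\<lambda>x. c * ga_sum_elem G x) | c :: 'k. True}" by blast
  qed
qed

theorem mainTheorem7:
  fixes G :: "('g, 'b) monoid_scheme" and p :: nat
  assumes "finite (UNIV :: 'k::field set)"
    and "prime p" and "CHAR('k) = p"
    and "group G" and "finite (carrier G)" and "\<exists>n. card (carrier G) = p ^ n"
  shows "checkable G {(\<lambda>x. c * ga_sum_elem G x) | c :: 'k. True} \<longleftrightarrow> cyclic_group G"
proof -
  interpret group G by fact
  obtain n where n: "order G = p ^ n" using assms(6) by (auto simp: order_def)
  show ?thesis
  proof
    assume "checkable G {(\<lambda>x. c * ga_sum_elem G x) | c :: 'k. True}"
    then obtain v :: "'g \<Rightarrow> 'k" where
      I: "{a \<in> group_algebra G. ga_mult G v a = (\<lambda>_. 0)} = {(\<lambda>x. c * ga_sum_elem G x) | c :: 'k. True}"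
      unfolding checkable_def by blast
    show "cyclic_group G"
    proof (rule ccontr)
      assume "\<not> cyclic_group G"
      then obtain N where "elementary_abelian_quotient G p N" "p < card (rcosets\<^bsub>G\<^esub> N)"
        using noncyclic_p_group_elementary_abelian_quotient[OF assms(2) n] by blast
      thus False using right_annihilator_ne_sum_ideal[OF assms(1-3,5)] I by blast
    qed
  next
    assume "cyclic_group G"
    thus "checkable G {(\<lambda>x. c * ga_sum_elem G x) | c :: 'k. True}"
      using cyclic_sum_ideal_checkable assms(5) by blast
  qed
qed

end
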